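(* Let $G$ be a connected (finite, simple) graph, $\mathcal{F}$ a maximum induced forest of $G$, $S=V(G)\setminus V(\mathcal{F})$, $H$ the contracted graph, and $B$ a skeleton of $H$ with the maximum possible number of 2-edges among all skeletons (all as defined in the context). Then every vertex of $S$ is incident in $B$ to at least one 2-edge.
   Context: A maximum induced forest of $G$ is an induced forest of $G$ with the maximum number of vertices. Let $\mathcal{T}$ be the set of connected components (trees) of $\mathcal{F}$ and $S=V(G)\setminus V(\mathcal{F})$. The graph $H$ has vertex set $\{x_T : T\in\mathcal{T}\}\cup S$ (the $x_T$ are called tree vertices, the vertices of $S$ non-tree vertices) and edge set consisting of all edges of $G[S]$ together with all pairs $ux_T$ with $u\in S$, $T\in\mathcal{T}$ such that $u$ has at least one neighbor in $V(T)$ in $G$. An edge $ux_T$ of $H$ is a 2-edge if $u$ has at least two neighbors in $V(T)$ in $G$; all other edges of $H$ (including all edges with both endpoints in $S$) are 1-edges. A skeleton is a spanning tree of $H$ rooted at some tree vertex, with all edges directed towards the root (an in-arborescence). *)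

theory Defs
  imports Main
begin

definition simple_graph :: "'a set \<Rightarrow> 'a set set \<Rightarrow> bool" where
  "simple_graph V E \<longleftrightarrow> finite V \<and>
     (\<forall>e\<in>E. \<exists>u v. e = {u, v} \<and> u \<noteq> v \<and> u \<in> V \<and> v \<in> V)"

definition adj_in :: "'a set set \<Rightarrow> 'a set \<Rightarrow> ('a \<times> 'a) set" where
  "adj_in E X = {(u, v). u \<in> X \<and> v \<in> X \<and> {u, v} \<in> E}"

definition connected_graph :: "'a set \<Rightarrow> 'a set set \<Rightarrow> bool" where
  "connected_graph V E \<longleftrightarrow> V \<noteq> {} \<and> (\<forall>u\<in>V. \<forall>v\<in>V. (u, v) \<in> (adj_in E V)\<^sup>*)"

definition is_cycle_in :: "'a set set \<Rightarrow> 'a set \<Rightarrow> 'a list \<Rightarrow> bool" where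
  "is_cycle_in E X cs \<longleftrightarrow> length cs \<ge> 3 \<and> distinct cs \<and> set cs \<subseteq> X \<and>
     (\<forall>i < length cs - 1. {cs ! i, cs ! Suc i} \<in> E) \<and> {last cs, hd cs} \<in> E"

definition induced_forest :: "'a set \<Rightarrow> 'a set set \<Rightarrow> 'a set \<Rightarrow> bool" where
  "induced_forest V E X \<longleftrightarrow> X \<subseteq> V \<and> (\<nexists>cs. is_cycle_in E X cs)"

definition max_induced_forest :: "'a set \<Rightarrow> 'a set set \<Rightarrow> 'a set \<Rightarrow> bool" where
  "max_induced_forest V E X \<longleftrightarrow> induced_forest V E X \<and>
     (\<forall>Y. induced_forest V E Y \<longrightarrow> card Y \<le> card X)"

definition components :: "'a set set \<Rightarrow> 'a set \<Rightarrow> 'a set set" where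
  "components E X = {{v \<in> X. (u, v) \<in> (adj_in E X)\<^sup>*} | u. u \<in> X}"

text \<open>Vertices of the contracted graph H: tree vertices x_T (represented by the
  vertex set of T) and non-tree vertices (vertices of S).\<close>
datatype 'a hvert = TreeV "'a set" | NonTree 'a

definition H_verts :: "'a set \<Rightarrow> 'a set set \<Rightarrow> 'a set \<Rightarrow> 'a hvert set" where
  "H_verts V E F = TreeV ` components E F \<union> NonTree ` (V - F)"

definition H_edges :: "'a set \<Rightarrow> 'a set set \<Rightarrow> 'a set \<Rightarrow> 'a hvert set set" where
  "H_edges V E F =
     {{NonTree u, NonTree v} | u v. u \<in> V - F \<and> v \<in> V - F \<and> {u, v} \<in> E} \<union>
     {{NonTree u, TreeV T} | u T. u \<in> V - F \<and> T \<in> components E F \<and>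
                                  (\<exists>w\<in>T. {u, w} \<in> E)}"

definition two_edge :: "'a set \<Rightarrow> 'a set set \<Rightarrow> 'a set \<Rightarrow> 'a hvert set \<Rightarrow> bool" where
  "two_edge V E F e \<longleftrightarrow> e \<in> H_edges V E F \<and>
     (\<exists>u T. e = {NonTree u, TreeV T} \<and> card {w \<in> T. {u, w} \<in> E} \<ge> 2)"

text \<open>A skeleton: spanning tree of H rooted at a tree vertex r, given as the set B
  of arcs directed towards the root (an in-arborescence).\<close>
definition skeleton :: "'a set \<Rightarrow> 'a set set \<Rightarrow> 'a set \<Rightarrow> 'a hvert \<Rightarrow>
                        ('a hvert \<times> 'a hvert) set \<Rightarrow> bool" where
  "skeleton V E F r B \<longleftrightarrow>
     r \<in> TreeV ` components E F \<and>
     (\<forall>(a, b) \<in> B. a \<in> H_verts V E F \<and> b \<in> H_verts V E F \<and> {a, b} \<in> H_edges V E F) \<and>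
     (\<forall>b. (r, b) \<notin> B) \<and>
     (\<forall>a \<in> H_verts V E F. a \<noteq> r \<longrightarrow> (\<exists>!b. (a, b) \<in> B)) \<and>
     (\<forall>a \<in> H_verts V E F. (a, r) \<in> B\<^sup>*)"

definition num_two_edges :: "'a set \<Rightarrow> 'a set set \<Rightarrow> 'a set \<Rightarrow>
                             ('a hvert \<times> 'a hvert) set \<Rightarrow> nat" where
  "num_two_edges V E F B = card {(a, b) \<in> B. two_edge V E F {a, b}}"

end

theory Submission
  imports Defs
begin

text \<open>Suppose some u \<in> S met no 2-edge of B. Maximality of the forest means that adding u
  creates a cycle; it passes through u and otherwise stays inside a single tree T, so u has
  two neighbours in T and u x_T is a 2-edge of H, which is not in B. Adding u x_T to B
  closes a cycle through u, and deleting the other edge of B on it at u, a 1-edge, yields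
  a skeleton with one more 2-edge. On in-arborescences this exchange is a re-rooting: if
  x_T is not below u, redirect the arc of u to x_T; otherwise reverse the path from
  x_T up to the child c of u, delete the arc c u and add the arc x_T u.\<close>

locale arborescence =
  fixes W :: "'v set" and r :: 'v and B :: "('v \<times> 'v) set"
  assumes arcs_in: "B \<subseteq> W \<times> W"
    and root_no_arc: "\<And>b. (r, b) \<notin> B"
    and ex1_arc: "\<And>a. a \<in> W \<Longrightarrow> a \<noteq> r \<Longrightarrow> \<exists>!b. (a, b) \<in> B"
    and reaches_root: "\<And>a. a \<in> W \<Longrightarrow> (a, r) \<in> B\<^sup>*"

definition undirected :: "('v \<times> 'v) set \<Rightarrow> 'v set set" where
  "undirected B = (\<lambda>(a, b). {a, b}) ` B"

definition path_between :: "('v \<times> 'v) set \<Rightarrow> 'v \<Rightarrow> 'v \<Rightarrow> 'v set" where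
  "path_between B a c = {p. (a, p) \<in> B\<^sup>* \<and> (p, c) \<in> B\<^sup>*}"

text \<open>Reverse the path from a up to c, drop the arc (c, d) leaving it and add (a, z): the
  subtree of c is re-hung from z, with a as its new top.\<close>
definition reroot :: "('v \<times> 'v) set \<Rightarrow> 'v \<Rightarrow> 'v \<Rightarrow> 'v \<Rightarrow> ('v \<times> 'v) set" where
  "reroot B a c z =
     (B - path_between B a c \<times> UNIV) \<union> (B \<inter> path_between B a c \<times> path_between B a c)\<inverse> \<union> {(a, z)}"

lemma undirected_Un: "undirected (X \<union> Y) = undirected X \<union> undirected Y"
  by (auto simp: undirected_def)

lemma undirected_insert: "undirected (insert (a, b) X) = insert {a, b} (undirected X)"
  by (simp add: undirected_def)

lemma undirected_subset_iff: "undirected X \<subseteq> Y \<longleftrightarrow> (\<forall>(a, b) \<in> X. {a, b} \<in> Y)"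
  by (auto simp: undirected_def)

lemma undirected_converse: "undirected (X\<inverse>) = undirected X"
  by (force simp: undirected_def)

context arborescence
begin

lemma arc_unique: "(a, b) \<in> B \<Longrightarrow> (a, b') \<in> B \<Longrightarrow> b = b'"
  using arcs_in root_no_arc ex1_arc by blast

lemma trancl_irrefl: "(a, a) \<notin> B\<^sup>+"
proof
  assume cyc: "(a, a) \<in> B\<^sup>+"
  have "(z, a) \<in> B\<^sup>+" if "(a, z) \<in> B\<^sup>*" for z
    using that
  proof (induction rule: rtrancl_induct)
    case base
    show ?case by (rule cyc)
  next
    case (step y z)
    from step.IH obtain w where "(y, w) \<in> B" "(w, a) \<in> B\<^sup>*"
      by (auto dest: tranclD)
    with step.hyps(2) arc_unique have "(z, a) \<in> B\<^sup>*" by blast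
    then show ?case using cyc by (metis rtrancl_eq_or_trancl)
  qed
  moreover have "a \<in> W" using cyc arcs_in by (auto dest: tranclD)
  ultimately have "(r, a) \<in> B\<^sup>+"
    using reaches_root by blast
  with root_no_arc show False by (auto dest: tranclD)
qed

lemma reachable_linear:
  assumes "(x, p) \<in> B\<^sup>*" and "(x, q) \<in> B\<^sup>*"
  shows "(p, q) \<in> B\<^sup>* \<or> (q, p) \<in> B\<^sup>*"
  using assms(2)
proof (induction rule: rtrancl_induct)
  case base
  show ?case using assms(1) by simp
next
  case (step y q)
  from step.IH show ?case
  proof
    assume "(y, p) \<in> B\<^sup>*"
    then consider "y = p" | w where "(y, w) \<in> B" "(w, p) \<in> B\<^sup>*"
      by (metis converse_rtranclE)
    then show ?thesis
      using step.hyps(2) arc_unique by cases auto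
  qed (use step.hyps(2) in auto)
qed

lemma in_arcs_eq_if_reachable:
  assumes "(p, v) \<in> B" and "(p', v) \<in> B" and "(p, p') \<in> B\<^sup>*"
  shows "p = p'"
proof (rule ccontr)
  assume "p \<noteq> p'"
  with assms(3) obtain w where "(p, w) \<in> B" "(w, p') \<in> B\<^sup>*"
    by (metis converse_rtranclE)
  moreover from \<open>(p, w) \<in> B\<close> assms(1) have "w = v" by (rule arc_unique)
  ultimately have "(v, v) \<in> B\<^sup>+" using assms(2) by auto
  with trancl_irrefl show False by blast
qed

lemma inj_on_undirected: "inj_on (\<lambda>(a, b). {a, b}) B"
proof (rule inj_onI, clarify)
  fix a b a' b'
  assume arcs: "(a, b) \<in> B" "(a', b') \<in> B" and "{a, b} = {a', b'}"
  then consider "a = a'" "b = b'" | "a = b'" "b = a'"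
    by (auto simp: doubleton_eq_iff)
  then show "a = a' \<and> b = b'"
  proof cases
    case 2
    with arcs have "(a, a) \<in> B\<^sup>+" by auto
    with trancl_irrefl show ?thesis by blast
  qed simp
qed

lemma card_arcs_eq_card_edges: "card {(a, b) \<in> B. P {a, b}} = card {e \<in> undirected B. P e}"
proof -
  have "{e \<in> undirected B. P e} = (\<lambda>(a, b). {a, b}) ` {(a, b) \<in> B. P {a, b}}"
    by (auto simp: undirected_def)
  moreover have "inj_on (\<lambda>(a, b). {a, b}) {(a, b) \<in> B. P {a, b}}"
    by (rule inj_on_subset[OF inj_on_undirected]) auto
  ultimately show ?thesis by (simp add: card_image)
qed

context
  fixes a c d z
  assumes a_c: "(a, c) \<in> B\<^sup>*" and c_d: "(c, d) \<in> B"
    and z_W: "z \<in> W" and z_c: "(z, c) \<notin> B\<^sup>*"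
begin

lemma path_between_ends: "a \<in> path_between B a c" "c \<in> path_between B a c"
  using a_c by (auto simp: path_between_def)

lemma path_between_subset: "path_between B a c \<subseteq> W"
proof
  fix p assume "p \<in> path_between B a c"
  then have "(p, c) \<in> B\<^sup>*" by (simp add: path_between_def)
  then show "p \<in> W"
    using c_d arcs_in by (cases rule: converse_rtranclE) auto
qed

lemma root_notin_path_between: "r \<notin> path_between B a c"
  using c_d root_no_arc by (auto simp: path_between_def elim: converse_rtranclE)

lemma path_between_not_reachable: "(z, p) \<in> B\<^sup>* \<Longrightarrow> p \<notin> path_between B a c"
  using z_c by (auto simp: path_between_def intro: rtrancl_trans)

lemma arcs_leaving_path_between:
  "B \<inter> path_between B a c \<times> - path_between B a c = {(c, d)}"
proof -
  have "d \<notin> path_between B a c"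
  proof
    assume "d \<in> path_between B a c"
    then have "(c, c) \<in> B\<^sup>+"
      using c_d by (simp add: path_between_def rtrancl_into_trancl2)
    with trancl_irrefl show False by blast
  qed
  moreover have "(p, q) = (c, d)"
    if p: "p \<in> path_between B a c" and pq: "(p, q) \<in> B" and q: "q \<notin> path_between B a c"
    for p q
  proof -
    have "p = c"
    proof (rule ccontr)
      assume "p \<noteq> c"
      moreover from p have "(p, c) \<in> B\<^sup>*" by (simp add: path_between_def)
      ultimately obtain w where "(p, w) \<in> B" "(w, c) \<in> B\<^sup>*"
        by (metis converse_rtranclE)
      moreover from \<open>(p, w) \<in> B\<close> pq have "w = q" by (rule arc_unique)
      moreover have "(a, q) \<in> B\<^sup>*"
        using p rtrancl_into_rtrancl[OF _ pq] by (simp add: path_between_def)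
      ultimately show False
        using q by (simp add: path_between_def)
    qed
    with pq c_d arc_unique show ?thesis by blast
  qed
  ultimately show ?thesis
    using c_d path_between_ends(2) by fast
qed

lemma path_between_pred_ex1:
  assumes v: "v \<in> path_between B a c" and "v \<noteq> a"
  shows "\<exists>!p. p \<in> path_between B a c \<and> (p, v) \<in> B"
proof -
  from v have av: "(a, v) \<in> B\<^sup>*" and vc: "(v, c) \<in> B\<^sup>*"
    by (simp_all add: path_between_def)
  from rtranclD[OF av] \<open>v \<noteq> a\<close> have "(a, v) \<in> B\<^sup>+" by simp
  then obtain p where ap: "(a, p) \<in> B\<^sup>*" and pv: "(p, v) \<in> B"
    using tranclD2 by metis
  show ?thesis
  proof (rule ex1I[of _ p])
    show "p \<in> path_between B a c \<and> (p, v) \<in> B"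
      using ap converse_rtrancl_into_rtrancl[OF pv vc] pv by (simp add: path_between_def)
  next
    fix p' assume p': "p' \<in> path_between B a c \<and> (p', v) \<in> B"
    then have "(a, p') \<in> B\<^sup>*" by (simp add: path_between_def)
    from reachable_linear[OF ap this] show "p' = p"
      using in_arcs_eq_if_reachable pv p' by metis
  qed
qed

lemma reroot_arc_iff:
  "(v, b) \<in> reroot B a c z \<longleftrightarrow>
     (if v \<in> path_between B a c then b \<in> path_between B a c \<and> (b, v) \<in> B \<or> v = a \<and> b = z
      else (v, b) \<in> B)"
  using path_between_ends(1) by (auto simp: reroot_def)

lemma reroot_ex1_arc:
  assumes "v \<in> W" and "v \<noteq> r"
  shows "\<exists>!b. (v, b) \<in> reroot B a c z"
proof (cases "v \<in> path_between B a c")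
  case False
  with ex1_arc[OF assms] show ?thesis
    by (simp add: reroot_arc_iff)
next
  case True
  show ?thesis
  proof (cases "v = a")
    case True
    have "(p, a) \<notin> B" if "p \<in> path_between B a c" for p
      using that trancl_irrefl[of a] by (auto simp: path_between_def dest: rtrancl_into_trancl1)
    with True path_between_ends have "(v, b) \<in> reroot B a c z \<longleftrightarrow> b = z" for b
      by (auto simp: reroot_arc_iff)
    then show ?thesis by simp
  next
    case False
    with path_between_pred_ex1[OF True] True show ?thesis
      by (simp add: reroot_arc_iff)
  qed
qed

lemma reaches_root_or_path_between:
  assumes "(v, r) \<in> B\<^sup>*"
  shows "(v, r) \<in> (B - path_between B a c \<times> UNIV)\<^sup>* \<or>
    (\<exists>p \<in> path_between B a c. (v, p) \<in> (B - path_between B a c \<times> UNIV)\<^sup>*)"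
  using assms
proof (induction rule: converse_rtrancl_induct)
  case (step v w)
  then show ?case
    by (cases "v \<in> path_between B a c") (auto intro: converse_rtrancl_into_rtrancl)
qed simp

lemma path_between_reaches_start:
  assumes "p \<in> path_between B a c"
  shows "(p, a) \<in> ((B \<inter> path_between B a c \<times> path_between B a c)\<inverse>)\<^sup>*"
proof -
  have "(a, p) \<in> B\<^sup>*" "(p, c) \<in> B\<^sup>*"
    using assms by (auto simp: path_between_def)
  then have "(a, p) \<in> (B \<inter> path_between B a c \<times> path_between B a c)\<^sup>*"
  proof (induction rule: rtrancl_induct)
    case (step q p)
    then have "q \<in> path_between B a c" "p \<in> path_between B a c"
      by (auto simp: path_between_def intro: converse_rtrancl_into_rtrancl)
    with step show ?case
      by (auto intro: rtrancl_into_rtrancl converse_rtrancl_into_rtrancl)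
  qed simp
  then show ?thesis by (simp add: rtrancl_converse)
qed

lemma reroot_reaches_root:
  assumes "v \<in> W"
  shows "(v, r) \<in> (reroot B a c z)\<^sup>*"
proof -
  let ?Q = "path_between B a c"
  have sub: "(B - ?Q \<times> UNIV)\<^sup>* \<subseteq> (reroot B a c z)\<^sup>*"
    "((B \<inter> ?Q \<times> ?Q)\<inverse>)\<^sup>* \<subseteq> (reroot B a c z)\<^sup>*"
    by (rule rtrancl_mono, force simp: reroot_def)+
  have "(z, r) \<in> (reroot B a c z)\<^sup>*"
    using reaches_root_or_path_between[OF reaches_root[OF z_W]] path_between_not_reachable sub(1)
      rtrancl_mono[of "B - ?Q \<times> UNIV" B]
    by blast
  moreover have "(p, z) \<in> (reroot B a c z)\<^sup>*" if "p \<in> ?Q" for p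
  proof -
    have "(p, a) \<in> (reroot B a c z)\<^sup>*"
      using path_between_reaches_start[OF that] sub(2) by blast
    moreover have "(a, z) \<in> reroot B a c z" by (simp add: reroot_def)
    ultimately show ?thesis by (rule rtrancl_into_rtrancl)
  qed
  ultimately show ?thesis
    using reaches_root_or_path_between[OF reaches_root[OF assms]] sub(1)
    by (blast intro: rtrancl_trans)
qed

lemma arborescence_reroot: "arborescence W r (reroot B a c z)"
proof
  show "reroot B a c z \<subseteq> W \<times> W"
    using arcs_in path_between_subset path_between_ends z_W by (auto simp: reroot_def)
  show "(r, b) \<notin> reroot B a c z" for b
    using root_no_arc root_notin_path_between path_between_ends by (auto simp: reroot_def)
qed (use reroot_ex1_arc reroot_reaches_root in auto)

lemma undirected_reroot:
  "undirected (reroot B a c z) = insert {a, z} (undirected B - {{c, d}})"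
proof -
  let ?Q = "path_between B a c"
  have "undirected (reroot B a c z) =
      insert {a, z} (undirected (B - ?Q \<times> UNIV) \<union> undirected (B \<inter> ?Q \<times> ?Q))"
    by (simp add: reroot_def undirected_Un undirected_converse undirected_insert)
  also have "undirected (B - ?Q \<times> UNIV) \<union> undirected (B \<inter> ?Q \<times> ?Q) = undirected B - {{c, d}}"
  proof -
    have "(B - ?Q \<times> UNIV) \<union> (B \<inter> ?Q \<times> ?Q) = B - {(c, d)}"
      using arcs_leaving_path_between by blast
    then show ?thesis
      using inj_on_image_set_diff[OF inj_on_undirected, of B "{(c, d)}"] c_d
      by (simp add: undirected_def flip: image_Un)
  qed
  finally show ?thesis .
qed

end

lemma finite_undirected: "finite W \<Longrightarrow> finite (undirected B)"
  using finite_subset[OF arcs_in] by (simp add: undirected_def)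

lemma edge_exchange:
  assumes x: "x \<in> W" and y: "y \<in> W" "y \<noteq> r" and "x \<noteq> y"
  obtains B' e where "arborescence W r B'" "undirected B' = insert {x, y} (undirected B - {e})"
    "e \<in> undirected B" "y \<in> e"
proof (cases "(x, y) \<in> B\<^sup>*")
  case False
  obtain b where yb: "(y, b) \<in> B" using ex1_arc[OF y] by blast
  have "(y, y) \<in> B\<^sup>*" by simp
  note exchange = arborescence_reroot[OF this yb x False] undirected_reroot[OF this yb x False]
  show ?thesis
    by (rule that[OF exchange(1)]) (use exchange(2) yb in \<open>auto simp: insert_commute undirected_def\<close>)
next
  case True
  with \<open>x \<noteq> y\<close> obtain c where xc: "(x, c) \<in> B\<^sup>*" and cy: "(c, y) \<in> B"
    by (metis rtranclD tranclD2)
  have "(y, c) \<notin> B\<^sup>*"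
    using trancl_irrefl[of c] cy by (auto dest: rtrancl_into_trancl2)
  note exchange = arborescence_reroot[OF xc cy y(1) this] undirected_reroot[OF xc cy y(1) this]
  show ?thesis
    by (rule that[OF exchange]) (use cy in \<open>auto simp: undirected_def\<close>)
qed

end

lemma skeleton_iff_arborescence:
  "skeleton V E F r B \<longleftrightarrow> r \<in> TreeV ` components E F \<and>
     arborescence (H_verts V E F) r B \<and> undirected B \<subseteq> H_edges V E F"
  unfolding skeleton_def arborescence_def undirected_subset_iff by fast

lemma finite_H_verts:
  assumes "finite V" and "F \<subseteq> V"
  shows "finite (H_verts V E F)"
proof -
  have "components E F \<subseteq> Pow F" by (auto simp: components_def)
  with assms have "finite (components E F)"
    by (meson finite_Pow_iff finite_subset)
  with assms(1) show ?thesis by (simp add: H_verts_def)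
qed

lemma two_edge_NonTree_TreeV:
  assumes "u \<in> V - F" and "T \<in> components E F" and "2 \<le> card {w \<in> T. {u, w} \<in> E}"
  shows "two_edge V E F {NonTree u, TreeV T}"
proof -
  have "{w \<in> T. {u, w} \<in> E} \<noteq> {}" using assms(3) by (metis card.empty not_numeral_le_zero)
  with assms(1,2) have "{NonTree u, TreeV T} \<in> H_edges V E F"
    unfolding H_edges_def by blast
  with assms(3) show ?thesis unfolding two_edge_def by blast
qed

lemma is_cycle_in_rotate1:
  assumes c: "is_cycle_in E X cs"
  shows "is_cycle_in E X (rotate1 cs)"
proof -
  have len: "length cs \<ge> 3" and dis: "distinct cs" and st: "set cs \<subseteq> X"
    and ed: "\<And>i. i < length cs - 1 \<Longrightarrow> {cs ! i, cs ! Suc i} \<in> E"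
    and cl: "{last cs, hd cs} \<in> E"
    using c by (auto simp: is_cycle_in_def)
  obtain a xs where cs: "cs = a # xs" using len by (cases cs) auto
  have lx: "length xs \<ge> 2" using len cs by simp
  have "{(xs @ [a]) ! i, (xs @ [a]) ! Suc i} \<in> E" if i: "i < length xs" for i
  proof (cases "Suc i < length xs")
    case True
    then show ?thesis using ed[of "Suc i"] cs by (simp add: nth_append)
  next
    case False
    then have "Suc i = length xs" using i by simp
    moreover have "last cs = xs ! i" using cs lx \<open>Suc i = length xs\<close>
      by (metis One_nat_def diff_Suc_1 last_ConsR last_conv_nth list.size(3) not_numeral_le_zero)
    ultimately show ?thesis using cl cs i by (simp add: nth_append)
  qed
  moreover have "{a, hd xs} \<in> E" using ed[of 0] cs lx by (cases xs) auto
  ultimately show ?thesis using len dis st cs lx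
    by (auto simp: is_cycle_in_def insert_commute hd_append)
qed

lemma is_cycle_in_rotate: "is_cycle_in E X cs \<Longrightarrow> is_cycle_in E X (rotate n cs)"
  by (induction n) (auto simp: is_cycle_in_rotate1)

lemma cycle_through_vertex:
  assumes "finite V" and mf: "max_induced_forest V E F" and "u \<in> V" and "u \<notin> F"
  obtains cs where "is_cycle_in E (insert u F) cs" and "hd cs = u"
proof -
  have FV: "F \<subseteq> V" and forest: "\<nexists>cs. is_cycle_in E F cs"
    using mf by (auto simp: max_induced_forest_def induced_forest_def)
  have "\<not> induced_forest V E (insert u F)"
  proof
    assume "induced_forest V E (insert u F)"
    with mf have "card (insert u F) \<le> card F" by (simp add: max_induced_forest_def)
    with assms(1,4) FV show False by (simp add: finite_subset)
  qed
  with FV \<open>u \<in> V\<close> obtain cs where cs: "is_cycle_in E (insert u F) cs"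
    by (auto simp: induced_forest_def)
  with forest have "u \<in> set cs" by (auto simp: is_cycle_in_def)
  then obtain i where "i < length cs" "cs ! i = u" by (auto simp: in_set_conv_nth)
  then have "hd (rotate i cs) = u"
    by (metis hd_rotate_conv_nth list.size(3) mod_less not_less_zero)
  with is_cycle_in_rotate[OF cs] that show thesis by blast
qed

lemma cycle_tail_in_component:
  assumes cyc: "is_cycle_in E (insert u F) cs" and "hd cs = u" and "u \<notin> F"
    and "1 \<le> j" and "j < length cs"
  shows "cs ! j \<in> F" and "(cs ! 1, cs ! j) \<in> (adj_in E F)\<^sup>*"
proof -
  have in_F: "cs ! i \<in> F" if "1 \<le> i" "i < length cs" for i
  proof -
    have "distinct cs" using cyc by (simp add: is_cycle_in_def)
    with that have "cs ! i \<noteq> cs ! 0" by (subst nth_eq_iff_index_eq) auto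
    moreover have "cs \<noteq> []" using that(2) by auto
    with assms(2) have "cs ! 0 = u" by (simp add: hd_conv_nth)
    moreover have "cs ! i \<in> insert u F"
      using cyc nth_mem[OF that(2)] by (auto simp: is_cycle_in_def)
    ultimately show ?thesis by simp
  qed
  then show "cs ! j \<in> F" using assms(4,5) .
  show "(cs ! 1, cs ! j) \<in> (adj_in E F)\<^sup>*"
    using assms(4,5)
  proof (induction rule: dec_induct)
    case (step i)
    then have "(cs ! i, cs ! Suc i) \<in> adj_in E F"
      using cyc in_F[of i] in_F[of "Suc i"] by (auto simp: is_cycle_in_def adj_in_def)
    with step show ?case by (meson Suc_lessD rtrancl_into_rtrancl)
  qed simp
qed

lemma two_neighbours_in_component:
  assumes "finite V" and "max_induced_forest V E F" and "u \<in> V" and "u \<notin> F"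
  obtains T where "T \<in> components E F" and "2 \<le> card {w \<in> T. {u, w} \<in> E}"
proof -
  obtain cs where cyc: "is_cycle_in E (insert u F) cs" and hd: "hd cs = u"
    using cycle_through_vertex[OF assms] .
  have len: "3 \<le> length cs" and "distinct cs" and "{last cs, hd cs} \<in> E"
    and "{cs ! 0, cs ! 1} \<in> E"
    using cyc by (auto simp: is_cycle_in_def)
  let ?n = "length cs - 1"
  have "cs \<noteq> []" using len by auto
  then have last: "last cs = cs ! ?n" by (rule last_conv_nth)
  define T where "T = {v \<in> F. (cs ! 1, v) \<in> (adj_in E F)\<^sup>*}"
  have "cs ! 1 \<in> T" "cs ! ?n \<in> T"
    using cycle_tail_in_component[OF cyc hd assms(4)] len by (auto simp: T_def)
  moreover have "cs ! 1 \<noteq> cs ! ?n"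
    using \<open>distinct cs\<close> len by (simp add: nth_eq_iff_index_eq)
  moreover have "{u, cs ! 1} \<in> E" "{u, cs ! ?n} \<in> E"
    using hd last hd_conv_nth[OF \<open>cs \<noteq> []\<close>] \<open>{last cs, hd cs} \<in> E\<close> \<open>{cs ! 0, cs ! 1} \<in> E\<close>
    by (simp_all add: insert_commute)
  ultimately have "card {cs ! 1, cs ! ?n} \<le> card {w \<in> T. {u, w} \<in> E}"
    using assms(1,2) by (intro card_mono) (auto simp: T_def max_induced_forest_def
        induced_forest_def intro: finite_subset)
  moreover have "T \<in> components E F"
    using \<open>cs ! 1 \<in> T\<close> unfolding T_def components_def by blast
  ultimately show thesis using that \<open>cs ! 1 \<noteq> cs ! ?n\<close> by simp
qed

lemma card_filter_insert_Diff:
  assumes "finite A" and "x \<notin> A" and "P x" and "\<not> P y"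
  shows "card {z \<in> insert x (A - {y}). P z} = Suc (card {z \<in> A. P z})"
proof -
  have "{z \<in> insert x (A - {y}). P z} = insert x {z \<in> A. P z}"
    using assms(3,4) by auto
  with assms(1,2) show ?thesis by simp
qed

lemma num_two_edges_exchange:
  assumes arb: "arborescence W r B" and arb': "arborescence W' r' B'" and "finite W"
    and B': "undirected B' = insert e (undirected B - {e0})" and "e \<notin> undirected B"
    and "two_edge V E F e" and "\<not> two_edge V E F e0"
  shows "num_two_edges V E F B' = Suc (num_two_edges V E F B)"
proof -
  have "card {x \<in> insert e (undirected B - {e0}). two_edge V E F x} =
      Suc (card {x \<in> undirected B. two_edge V E F x})"
    using assms(3,5-) arborescence.finite_undirected[OF arb] by (intro card_filter_insert_Diff)
  then show ?thesis
    by (simp only: num_two_edges_def arborescence.card_arcs_eq_card_edges[OF arb]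
        arborescence.card_arcs_eq_card_edges[OF arb'] B')
qed

theorem lemma4:
  fixes V :: "'a set" and E :: "'a set set" and F :: "'a set"
    and r :: "'a hvert" and B :: "('a hvert \<times> 'a hvert) set"
  assumes "simple_graph V E"
    and "connected_graph V E"
    and "max_induced_forest V E F"
    and "skeleton V E F r B"
    and "\<forall>r' B'. skeleton V E F r' B' \<longrightarrow> num_two_edges V E F B' \<le> num_two_edges V E F B"
  shows "\<forall>u \<in> V - F. \<exists>(a, b) \<in> B. (a = NonTree u \<or> b = NonTree u) \<and> two_edge V E F {a, b}"
proof
  fix u assume u: "u \<in> V - F"
  let ?y = "NonTree u" and ?P = "two_edge V E F"
  show "\<exists>(a, b) \<in> B. (a = ?y \<or> b = ?y) \<and> ?P {a, b}"
  proof (rule ccontr)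
    assume "\<not> ?thesis"
    then have no_two: "\<not> ?P e" if "e \<in> undirected B" "?y \<in> e" for e
      using that by (auto simp: undirected_def)
    have fin: "finite V" and FV: "F \<subseteq> V"
      using assms(1,3) by (auto simp: simple_graph_def max_induced_forest_def induced_forest_def)
    obtain T where T: "T \<in> components E F" "2 \<le> card {w \<in> T. {u, w} \<in> E}"
      using two_neighbours_in_component[OF fin assms(3)] u by blast
    let ?x = "TreeV T"
    have P: "?P {?x, ?y}" using two_edge_NonTree_TreeV[OF u T] by (simp add: insert_commute)
    have r: "r \<in> TreeV ` components E F" and arb: "arborescence (H_verts V E F) r B"
      and edges: "undirected B \<subseteq> H_edges V E F"
      using assms(4) by (simp_all add: skeleton_iff_arborescence)
    obtain B' e where arb': "arborescence (H_verts V E F) r B'"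
      and B': "undirected B' = insert {?x, ?y} (undirected B - {e})"
      and e: "e \<in> undirected B" "?y \<in> e"
      using arborescence.edge_exchange[OF arb, of ?x ?y] T(1) u r
      by (auto simp: H_verts_def)
    have "skeleton V E F r B'"
      using r arb' B' edges P by (auto simp: skeleton_iff_arborescence two_edge_def)
    moreover have "num_two_edges V E F B' = Suc (num_two_edges V E F B)"
      using num_two_edges_exchange[OF arb arb' finite_H_verts[OF fin FV] B'] no_two[OF e] P
        no_two[of "{?x, ?y}"] by auto
    ultimately show False using assms(5) by fastforce
  qed
qed

end
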